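(* Let $G$ be a finitely generated group with finite generating set $S_G$ and let $H\ne\{1\}$ be a finite group. Equip $H\wr G$ with the word metric with respect to $(H\setminus\{1\})\cup S_G$ and let $K$ be the kernel of the projection $H\wr G\to G$ with the induced metric. If $\gamma$ is the growth function of $G$, then $D_K^0(r):=(2r+1)\gamma(r)$ is a $0$-dimensional control function of $K$.
   Context: Wreath product: $H\wr G$ is the set of pairs $(f,g)$, $f:G\to H$ finitely supported, with $(f_1,g_1)(f_2,g_2)=(f_1\cdot(g_1f_2),g_1g_2)$ where $(gf)(\gamma)=f(g^{-1}\gamma)$; $g\in G$ is identified with $(1,g)$ and $a\in H$ with $(f_a,1)$, $f_a(1)=a$, $f_a(\gamma)=1$ otherwise; the projection is $(f,g)\mapsto g$. Growth function: $\gamma(r)=\#\{g\in G:|g|_{S_G}<r\}$. For a metric space $X$, $r>0$: $r$-components of $Y\subseteq X$ are classes of points joined by sequences in $Y$ with consecutive distances $<r$. An $m$-dimensional control function of $X$ is $D:\mathbb{R}_+\to\mathbb{R}_+\cup\{\infty\}$ such that for each $r>0$ there is a cover $\{X_0,\dots,X_m\}$ of $X$ such that every open ball $B(x,r)$ lies in some $X_i$ and every $r$-component of each $X_i$ has diameter at most $D(r)$. *)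

theory Defs
  imports Complex_Main "HOL-Library.Extended_Real"
begin

text \<open>Groups are modelled as types of class group_add (the group operation is
written additively, but no commutativity is assumed).\<close>

definition gen_by :: "'g::group_add set \<Rightarrow> bool" where
  "gen_by S \<longleftrightarrow> (\<forall>x. \<exists>ws. set ws \<subseteq> S \<union> uminus ` S \<and> sum_list ws = x)"

definition grp_wlen :: "'g::group_add set \<Rightarrow> 'g \<Rightarrow> nat" where
  "grp_wlen S x = (LEAST n. \<exists>ws. length ws = n \<and> set ws \<subseteq> S \<union> uminus ` S \<and> sum_list ws = x)"

definition growth :: "'g::group_add set \<Rightarrow> real \<Rightarrow> nat" where
  "growth S r = card {g. real (grp_wlen S g) < r}"

type_synonym ('h,'g) wr = "('g \<Rightarrow> 'h) \<times> 'g"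

definition wr_carrier :: "('h::group_add, 'g::group_add) wr set" where
  "wr_carrier = {(f, g). finite {x. f x \<noteq> 0}}"

definition wr_mult :: "('h::group_add, 'g::group_add) wr \<Rightarrow> ('h,'g) wr \<Rightarrow> ('h,'g) wr" where
  "wr_mult p q = (case p of (f1, g1) \<Rightarrow> case q of (f2, g2) \<Rightarrow>
      (\<lambda>x. f1 x + f2 (- g1 + x), g1 + g2))"

definition wr_one :: "('h::group_add, 'g::group_add) wr" where
  "wr_one = (\<lambda>_. 0, 0)"

definition wr_inv :: "('h::group_add, 'g::group_add) wr \<Rightarrow> ('h,'g) wr" where
  "wr_inv p = (case p of (f, g) \<Rightarrow> (\<lambda>x. - f (g + x), - g))"

definition emb_G :: "'g::group_add \<Rightarrow> ('h::group_add, 'g) wr" where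
  "emb_G g = (\<lambda>_. 0, g)"

definition emb_H :: "'h::group_add \<Rightarrow> ('h, 'g::group_add) wr" where
  "emb_H a = (\<lambda>x. if x = 0 then a else 0, 0)"

definition wr_gens :: "'g::group_add set \<Rightarrow> ('h::group_add, 'g) wr set" where
  "wr_gens S = emb_H ` {a. a \<noteq> 0} \<union> emb_G ` S"

definition wr_prod :: "('h::group_add, 'g::group_add) wr list \<Rightarrow> ('h,'g) wr" where
  "wr_prod ws = foldr wr_mult ws wr_one"

definition wr_wlen :: "'g::group_add set \<Rightarrow> ('h::group_add, 'g) wr \<Rightarrow> nat" where
  "wr_wlen S x = (LEAST n. \<exists>ws. length ws = n \<and>
      set ws \<subseteq> wr_gens S \<union> wr_inv ` wr_gens S \<and> wr_prod ws = x)"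

definition wr_dist :: "'g::group_add set \<Rightarrow> ('h::group_add, 'g) wr \<Rightarrow> ('h,'g) wr \<Rightarrow> real" where
  "wr_dist S x y = real (wr_wlen S (wr_mult (wr_inv x) y))"

definition wr_kernel :: "('h::group_add, 'g::group_add) wr set" where
  "wr_kernel = {p \<in> wr_carrier. snd p = 0}"

definition mball :: "('a \<Rightarrow> 'a \<Rightarrow> real) \<Rightarrow> 'a set \<Rightarrow> 'a \<Rightarrow> real \<Rightarrow> 'a set" where
  "mball d X x r = {y \<in> X. d x y < r}"

definition r_component :: "('a \<Rightarrow> 'a \<Rightarrow> real) \<Rightarrow> real \<Rightarrow> 'a set \<Rightarrow> 'a \<Rightarrow> 'a set" where
  "r_component d r Y x =
     {y. x \<in> Y \<and> (\<lambda>a b. a \<in> Y \<and> b \<in> Y \<and> d a b < r)\<^sup>*\<^sup>* x y}"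

definition r_components :: "('a \<Rightarrow> 'a \<Rightarrow> real) \<Rightarrow> real \<Rightarrow> 'a set \<Rightarrow> 'a set set" where
  "r_components d r Y = r_component d r Y ` Y"

definition diam_le :: "('a \<Rightarrow> 'a \<Rightarrow> real) \<Rightarrow> 'a set \<Rightarrow> ereal \<Rightarrow> bool" where
  "diam_le d C D \<longleftrightarrow> (\<forall>x\<in>C. \<forall>y\<in>C. ereal (d x y) \<le> D)"

definition control_function ::
  "nat \<Rightarrow> ('a \<Rightarrow> 'a \<Rightarrow> real) \<Rightarrow> 'a set \<Rightarrow> (real \<Rightarrow> ereal) \<Rightarrow> bool" where
  "control_function m d X D \<longleftrightarrow>
     (\<forall>r>0. \<exists>Xs :: nat \<Rightarrow> 'a set.
        (\<forall>i\<le>m. Xs i \<subseteq> X) \<and> X = (\<Union>i\<le>m. Xs i) \<and>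
        (\<forall>x\<in>X. \<exists>i\<le>m. mball d X x r \<subseteq> Xs i) \<and>
        (\<forall>i\<le>m. \<forall>C\<in>r_components d r (Xs i). diam_le d C (D r)))"

end

(* Only the letters from G move the lamplighter, so a word of length n changes only lamps
   at G-distance < n from the origin.  Consequently two kernel elements at distance < r differ
   only on the ball B(r) of G, and so do any two elements of one r-component of the kernel.
   Conversely, a kernel element supported in B(r) is spelled by walking along a geodesic to
   each lamp z, changing it and walking back, which costs 2|z| + 1 <= 2r + 1 letters per lamp;
   this bounds the diameter of a component by (2r + 1)|B(r)|.  The single set X_0 = K then
   witnesses the 0-dimensional control function. *)

theory Submission
  imports Defs
begin

abbreviation wr_letters :: "'g::group_add set \<Rightarrow> ('h::group_add, 'g) wr set" where
  "wr_letters S \<equiv> wr_gens S \<union> wr_inv ` wr_gens S"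

definition wr_spells :: "'g::group_add set \<Rightarrow> nat \<Rightarrow> ('h::group_add, 'g) wr \<Rightarrow> bool" where
  "wr_spells S n p \<longleftrightarrow> (\<exists>ws. set ws \<subseteq> wr_letters S \<and> length ws \<le> n \<and> wr_prod ws = p)"

lemma wr_mult_assoc: "wr_mult (wr_mult p q) u = wr_mult p (wr_mult q u)"
  by (cases p; cases q; cases u)
    (simp add: wr_mult_def add.assoc minus_add diff_conv_add_uminus del: add_uminus_conv_diff)

lemma wr_mult_one_left [simp]: "wr_mult wr_one p = p"
  by (cases p) (simp add: wr_mult_def wr_one_def)

lemma wr_mult_one_right [simp]: "wr_mult p wr_one = p"
  by (cases p) (simp add: wr_mult_def wr_one_def)

lemma wr_prod_append: "wr_prod (xs @ ys) = wr_mult (wr_prod xs) (wr_prod ys)"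
  by (induction xs) (simp_all add: wr_prod_def wr_mult_assoc)

lemma wr_prod_map_emb_G:
  "wr_prod (map emb_G ws) = (emb_G (sum_list ws) :: ('h::group_add, 'g::group_add) wr)"
  by (induction ws) (simp_all add: wr_prod_def wr_one_def emb_G_def wr_mult_def)

lemma wr_inv_emb_G: "wr_inv (emb_G g) = emb_G (- g)"
  by (simp add: wr_inv_def emb_G_def)

lemma wr_inv_emb_H: "wr_inv (emb_H a :: ('h::group_add, 'g::group_add) wr) = emb_H (- a)"
  by (auto simp add: wr_inv_def emb_H_def)

lemma emb_G_in_wr_letters:
  assumes "s \<in> S \<union> uminus ` S"
  shows "(emb_G s :: ('h::group_add, 'g::group_add) wr) \<in> wr_letters S"
proof (cases "s \<in> S")
  case True
  then show ?thesis by (simp add: wr_gens_def)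
next
  case False
  then obtain t where "t \<in> S" "s = - t"
    using assms by auto
  then have "(emb_G s :: ('h, 'g) wr) = wr_inv (emb_G t)"
    by (simp add: wr_inv_emb_G)
  moreover have "(emb_G t :: ('h, 'g) wr) \<in> wr_gens S"
    using \<open>t \<in> S\<close> by (simp add: wr_gens_def)
  ultimately show ?thesis by blast
qed

lemma wr_letters_cases:
  assumes "w \<in> wr_letters S"
  obtains a where "w = emb_H a" | s where "s \<in> S \<union> uminus ` S" "w = emb_G s"
proof -
  from assms consider a where "w = emb_H a" | a where "w = wr_inv (emb_H a)"
    | s where "s \<in> S" "w = emb_G s" | s where "s \<in> S" "w = wr_inv (emb_G s)"
    unfolding wr_gens_def by blast
  then show thesis
  proof cases
    case (2 a)
    then show thesis using that(1)[of "- a"] by (simp add: wr_inv_emb_H)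
  next
    case (4 s)
    then show thesis using that(2)[of "- s"] by (simp add: wr_inv_emb_G)
  qed (use that in auto)
qed

lemma wr_conj_emb_H:
  "wr_mult (emb_G z) (wr_mult (emb_H a) (wr_mult (emb_G (- z)) (h, g)))
     = ((\<lambda>x. (if x = z then a else 0) + h x, g) :: ('h::group_add, 'g::group_add) wr)"
  by (auto simp: wr_mult_def emb_G_def emb_H_def add_eq_0_iff2)

lemma grp_wlen_geodesic:
  assumes "gen_by S"
  obtains ws where "length ws = grp_wlen S x" "set ws \<subseteq> S \<union> uminus ` S" "sum_list ws = x"
proof -
  from assms obtain ws where "set ws \<subseteq> S \<union> uminus ` S \<and> sum_list ws = x"
    unfolding gen_by_def by blast
  then have "\<exists>n ws. length ws = n \<and> set ws \<subseteq> S \<union> uminus ` S \<and> sum_list ws = x" by blast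
  from LeastI_ex[OF this] obtain vs
    where "length vs = grp_wlen S x" "set vs \<subseteq> S \<union> uminus ` S" "sum_list vs = x"
    unfolding grp_wlen_def by blast
  then show thesis by (rule that)
qed

lemma grp_wlen_le:
  assumes "set ws \<subseteq> S \<union> uminus ` S" "sum_list ws = x"
  shows "grp_wlen S x \<le> length ws"
  unfolding grp_wlen_def by (rule Least_le) (use assms in blast)

lemma grp_wlen_zero [simp]: "grp_wlen S 0 = 0"
  using grp_wlen_le[of "[]" S 0] by simp

lemma grp_wlen_add_generator:
  assumes "gen_by S" "s \<in> S \<union> uminus ` S"
  shows "grp_wlen S (s + x) \<le> Suc (grp_wlen S x)"
proof -
  obtain ws where "length ws = grp_wlen S x" "set ws \<subseteq> S \<union> uminus ` S" "sum_list ws = x"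
    using grp_wlen_geodesic[OF assms(1)] .
  then show ?thesis
    using grp_wlen_le[of "s # ws" S "s + x"] assms(2) by simp
qed

lemma grp_wlen_uminus_le:
  assumes "gen_by S"
  shows "grp_wlen S (- x) \<le> grp_wlen S x"
proof -
  obtain ws where ws: "length ws = grp_wlen S x" "set ws \<subseteq> S \<union> uminus ` S" "sum_list ws = x"
    using grp_wlen_geodesic[OF assms] .
  have "sum_list (rev (map uminus ws)) = - sum_list ws"
    by (induction ws) (simp_all add: minus_add)
  moreover have "set (rev (map uminus ws)) \<subseteq> S \<union> uminus ` S"
    using ws(2) by auto
  ultimately show ?thesis
    using grp_wlen_le[of "rev (map uminus ws)" S "- x"] ws by simp
qed

lemma finite_grp_wlen_ball:
  assumes "finite S" "gen_by S"
  shows "finite {g::'g::group_add. real (grp_wlen S g) < r}"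
proof -
  let ?W = "{ws. set ws \<subseteq> S \<union> uminus ` S \<and> length ws \<le> nat \<lceil>r\<rceil>}"
  have "{g::'g. real (grp_wlen S g) < r} \<subseteq> sum_list ` ?W"
  proof
    fix g :: 'g assume "g \<in> {g. real (grp_wlen S g) < r}"
    moreover obtain ws where "length ws = grp_wlen S g" "set ws \<subseteq> S \<union> uminus ` S" "sum_list ws = g"
      using grp_wlen_geodesic[OF assms(2)] .
    ultimately have "int (length ws) < \<lceil>r\<rceil>" "set ws \<subseteq> S \<union> uminus ` S" "g = sum_list ws"
      by (simp_all add: less_ceiling_iff)
    then have "ws \<in> ?W" "g = sum_list ws"
      by auto
    then show "g \<in> sum_list ` ?W" by blast
  qed
  moreover have "finite ?W"
    by (rule finite_lists_length_le) (use assms(1) in simp)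
  ultimately show ?thesis
    using finite_subset by blast
qed

lemma wr_spells_mult:
  assumes "wr_spells S m p" "wr_spells S n q"
  shows "wr_spells S (m + n) (wr_mult p q)"
proof -
  obtain ws vs where "set ws \<subseteq> wr_letters S" "length ws \<le> m" "wr_prod ws = p"
    "set vs \<subseteq> wr_letters S" "length vs \<le> n" "wr_prod vs = q"
    using assms unfolding wr_spells_def by blast
  then show ?thesis
    unfolding wr_spells_def by (intro exI[of _ "ws @ vs"]) (auto simp: wr_prod_append)
qed

lemma wr_spells_emb_G:
  assumes "gen_by S"
  shows "wr_spells S (grp_wlen S g) (emb_G g :: ('h::group_add, 'g::group_add) wr)"
proof -
  obtain ws where ws: "length ws = grp_wlen S g" "set ws \<subseteq> S \<union> uminus ` S" "sum_list ws = g"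
    using grp_wlen_geodesic[OF assms] .
  have "set (map emb_G ws) \<subseteq> (wr_letters S :: ('h, 'g) wr set)"
    using ws(2) emb_G_in_wr_letters by (metis (no_types) image_subset_iff set_map subsetD)
  with ws show ?thesis
    unfolding wr_spells_def by (intro exI[of _ "map emb_G ws"]) (simp add: wr_prod_map_emb_G)
qed

lemma wr_spells_emb_H:
  assumes "a \<noteq> 0"
  shows "wr_spells S 1 (emb_H a :: ('h::group_add, 'g::group_add) wr)"
  unfolding wr_spells_def
  by (intro exI[of _ "[emb_H a]"]) (auto simp: wr_prod_def wr_gens_def assms)

lemma wr_spells_mono: "wr_spells S m p \<Longrightarrow> m \<le> n \<Longrightarrow> wr_spells S n p"
  unfolding wr_spells_def by fastforce

lemma wr_spells_lamps:
  assumes "gen_by S" "finite F" "{x. h x \<noteq> 0} \<subseteq> F"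
  shows "wr_spells S (\<Sum>z\<in>F. 2 * grp_wlen S z + 1) ((h, 0) :: ('h::group_add, 'g::group_add) wr)"
  using assms(2,3)
proof (induction F arbitrary: h rule: finite_induct)
  case empty
  then have "(h, 0) = (wr_one :: ('h, 'g) wr)"
    by (auto simp: wr_one_def)
  then show ?case
    unfolding wr_spells_def by (intro exI[of _ "[]"]) (simp add: wr_prod_def)
next
  case (insert z F)
  let ?n = "\<Sum>y\<in>F. 2 * grp_wlen S y + 1"
  have rest: "wr_spells S ?n ((h(z := 0), 0) :: ('h, 'g) wr)"
    using insert.prems by (intro insert.IH) auto
  show ?case
  proof (cases "h z = 0")
    case True
    then show ?thesis
      using rest insert.hyps by (auto simp: fun_upd_idem intro: wr_spells_mono)
  next
    case False
    have "(h, 0) = wr_mult (emb_G z) (wr_mult (emb_H (h z)) (wr_mult (emb_G (- z)) (h(z := 0), 0)))"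
      unfolding wr_conj_emb_H by auto
    moreover have "wr_spells S (grp_wlen S z + (1 + (grp_wlen S z + ?n))) \<dots>"
      using wr_spells_mono[OF wr_spells_emb_G[OF assms(1)] grp_wlen_uminus_le[OF assms(1)]]
      by (intro wr_spells_mult wr_spells_emb_G wr_spells_emb_H rest False assms(1))
    ultimately show ?thesis
      using insert.hyps by (auto elim: wr_spells_mono)
  qed
qed

lemma wr_wlen_le_spells:
  assumes "wr_spells S n p"
  shows "wr_wlen S p \<le> n"
proof -
  obtain ws where "set ws \<subseteq> wr_letters S" "length ws \<le> n" "wr_prod ws = p"
    using assms unfolding wr_spells_def by blast
  then have "wr_wlen S p \<le> length ws"
    unfolding wr_wlen_def by (intro Least_le) blast
  with \<open>length ws \<le> n\<close> show ?thesis by simp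
qed

lemma wr_spells_wr_wlen:
  assumes "wr_spells S n p"
  shows "wr_spells S (wr_wlen S p) p"
proof -
  from assms have "\<exists>n ws. length ws = n \<and> set ws \<subseteq> wr_letters S \<and> wr_prod ws = p"
    unfolding wr_spells_def by blast
  from LeastI_ex[OF this] show ?thesis
    unfolding wr_spells_def wr_wlen_def by auto
qed

lemma grp_wlen_lamp_less_length:
  assumes "gen_by S" "set ws \<subseteq> wr_letters S" "wr_prod ws = (h, g)" "h z \<noteq> 0"
  shows "grp_wlen S z < length ws"
  using assms(2-4)
proof (induction ws arbitrary: h g z)
  case Nil
  then show ?case by (auto simp: wr_prod_def wr_one_def)
next
  case (Cons w ws)
  obtain h' g' where hg': "wr_prod ws = (h', g')" by fastforce
  have IH: "grp_wlen S y < length ws" if "h' y \<noteq> 0" for y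
    using Cons.IH Cons.prems(1) hg' that by auto
  have prod: "wr_mult w (h', g') = (h, g)"
    using Cons.prems(2) hg' by (simp add: wr_prod_def)
  have "w \<in> wr_letters S"
    using Cons.prems(1) by simp
  then show ?case
  proof (cases rule: wr_letters_cases)
    case (1 a)
    with prod have "h z = (if z = 0 then a else 0) + h' z"
      by (auto simp: wr_mult_def emb_H_def)
    then show ?thesis
      using Cons.prems(3) IH[of z] by (cases "z = 0") auto
  next
    case (2 s)
    with prod have "h z = h' (- s + z)"
      by (auto simp: wr_mult_def emb_G_def)
    then have "grp_wlen S (- s + z) < length ws"
      using Cons.prems(3) IH by auto
    moreover have "grp_wlen S (s + (- s + z)) \<le> Suc (grp_wlen S (- s + z))"
      using assms(1) 2(1) by (rule grp_wlen_add_generator)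
    ultimately show ?thesis
      by (simp add: add.assoc[symmetric])
  qed
qed

lemma wr_kernel_iff: "p \<in> wr_kernel \<longleftrightarrow> p = (fst p, 0) \<and> finite {x. fst p x \<noteq> 0}"
  by (cases p) (auto simp: wr_kernel_def wr_carrier_def)

lemma wr_dist_kernel:
  assumes "p \<in> wr_kernel" "q \<in> (wr_kernel :: ('h::group_add, 'g::group_add) wr set)"
  shows "wr_dist S p q = real (wr_wlen S ((\<lambda>x. - fst p x + fst q x, 0) :: ('h, 'g) wr))"
proof -
  obtain f1 f2 where "p = (f1, 0)" "q = (f2, 0)"
    using assms by (auto simp: wr_kernel_iff)
  then show ?thesis
    by (simp add: wr_dist_def wr_mult_def wr_inv_def)
qed

lemma wr_dist_kernel_le:
  assumes "gen_by S" "finite F" "{x. fst p x \<noteq> fst q x} \<subseteq> F"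
    and "p \<in> wr_kernel" "q \<in> (wr_kernel :: ('h::group_add, 'g::group_add) wr set)"
  shows "wr_dist S p q \<le> (\<Sum>z\<in>F. 2 * grp_wlen S z + 1)"
proof -
  have "{x. - fst p x + fst q x \<noteq> 0} \<subseteq> F"
    using assms(3) by (auto simp: add_eq_0_iff2)
  from wr_wlen_le_spells[OF wr_spells_lamps[OF assms(1,2) this]] show ?thesis
    unfolding wr_dist_kernel[OF assms(4,5)] by (metis of_nat_le_iff)
qed

lemma wr_dist_kernel_less_imp_lamps:
  assumes "gen_by S" "wr_dist S p q < r" "fst p z \<noteq> fst q z"
    and "p \<in> wr_kernel" "q \<in> (wr_kernel :: ('h::group_add, 'g::group_add) wr set)"
  shows "real (grp_wlen S z) < r"
proof -
  let ?k = "(\<lambda>x. - fst p x + fst q x, 0) :: ('h, 'g) wr"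
  have fin: "finite ({x. fst p x \<noteq> 0} \<union> {x. fst q x \<noteq> 0})"
    using assms(4,5) by (simp add: wr_kernel_iff)
  have "{x. - fst p x + fst q x \<noteq> 0} \<subseteq> {x. fst p x \<noteq> 0} \<union> {x. fst q x \<noteq> 0}"
    by auto
  from wr_spells_wr_wlen[OF wr_spells_lamps[OF assms(1) fin this]]
  have "wr_spells S (wr_wlen S ?k) ?k" .
  then obtain ws where "set ws \<subseteq> wr_letters S" "length ws \<le> wr_wlen S ?k" "wr_prod ws = ?k"
    unfolding wr_spells_def by blast
  moreover have "- fst p z + fst q z \<noteq> 0"
    using assms(3) by (simp add: add_eq_0_iff2)
  ultimately have "grp_wlen S z < wr_wlen S ?k"
    using grp_wlen_lamp_less_length[OF assms(1)] by fastforce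
  then show ?thesis
    using assms(2) unfolding wr_dist_kernel[OF assms(4,5)] by linarith
qed

lemma r_component_wr_kernel_lamps:
  assumes "gen_by S" "y \<in> r_component (wr_dist S) r wr_kernel x"
  shows "y \<in> wr_kernel \<and> (\<forall>z. fst x z \<noteq> fst y z \<longrightarrow> real (grp_wlen S z) < r)"
proof -
  have x: "x \<in> wr_kernel"
    using assms(2) by (simp add: r_component_def)
  have "(\<lambda>a b. a \<in> wr_kernel \<and> b \<in> wr_kernel \<and> wr_dist S a b < r)\<^sup>*\<^sup>* x y"
    using assms(2) by (auto simp: r_component_def)
  then show ?thesis
  proof (induction rule: rtranclp_induct)
    case base
    show ?case using x by simp
  next
    case (step y y')
    have "real (grp_wlen S z) < r" if "fst y z \<noteq> fst y' z" for z
      using step.hyps(2) that by (auto intro: wr_dist_kernel_less_imp_lamps[OF assms(1)])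
    with step.IH step.hyps(2) show ?case
      by metis
  qed
qed

lemma diam_le_r_component_wr_kernel:
  assumes "finite S" "gen_by S" "C \<in> r_components (wr_dist S) r wr_kernel"
  shows "diam_le (wr_dist S) C (ereal ((2 * r + 1) * real (growth S r)))"
  unfolding diam_le_def
proof (intro ballI)
  fix y1 y2 assume "y1 \<in> C" "y2 \<in> C"
  obtain x where "C = r_component (wr_dist S) r wr_kernel x"
    using assms(3) by (auto simp: r_components_def)
  let ?B = "{g. real (grp_wlen S g) < r}"
  have y1: "y1 \<in> wr_kernel" "\<forall>z. fst x z \<noteq> fst y1 z \<longrightarrow> z \<in> ?B"
    and y2: "y2 \<in> wr_kernel" "\<forall>z. fst x z \<noteq> fst y2 z \<longrightarrow> z \<in> ?B"
    using r_component_wr_kernel_lamps[OF assms(2), of _ r x] \<open>y1 \<in> C\<close> \<open>y2 \<in> C\<close> \<open>C = _\<close>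
    by blast+
  then have "{z. fst y1 z \<noteq> fst y2 z} \<subseteq> ?B"
    by (metis (mono_tags, lifting) mem_Collect_eq subsetI)
  then have "wr_dist S y1 y2 \<le> (\<Sum>z\<in>?B. 2 * grp_wlen S z + 1)"
    using finite_grp_wlen_ball[OF assms(1,2)] y1(1) y2(1) by (intro wr_dist_kernel_le[OF assms(2)])
  also have "\<dots> = (\<Sum>z\<in>?B. 2 * real (grp_wlen S z) + 1)"
    by (simp add: add.commute)
  also have "\<dots> \<le> (\<Sum>z\<in>?B. 2 * r + 1)"
    by (rule sum_mono) simp
  also have "\<dots> = (2 * r + 1) * real (growth S r)"
    by (simp add: growth_def)
  finally show "ereal (wr_dist S y1 y2) \<le> ereal ((2 * r + 1) * real (growth S r))"
    by simp
qed

lemma control_function_0I: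
  assumes "\<And>r C. r > 0 \<Longrightarrow> C \<in> r_components d r X \<Longrightarrow> diam_le d C (D r)"
  shows "control_function 0 d X D"
  unfolding control_function_def
  by (intro allI impI exI[of _ "\<lambda>_. X"]) (auto simp: mball_def assms)

theorem theorem4p2:
  fixes S :: "'g::group_add set"
  assumes "finite S" and "gen_by S"
    and "(UNIV :: 'h::{group_add, finite} set) \<noteq> {0}"
  shows "control_function 0 (wr_dist S :: ('h,'g) wr \<Rightarrow> ('h,'g) wr \<Rightarrow> real)
           wr_kernel (\<lambda>r. ereal ((2 * r + 1) * real (growth S r)))"
  using assms(1,2) by (intro control_function_0I diam_le_r_component_wr_kernel)

end
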